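(* Let $m,k$ be positive integers with $m\ge4$ and $m>k+2$. For $z\in\mathbb{F}_{2^k}$ define $f^{(z)}:\mathbb{F}_{2^m}\times\mathbb{F}_{2^m}\to\mathbb{F}_2$ by $f^{(z)}(x_1,x_2)={\rm Tr}_1^m(x_1x_2^{2^m-2})$ if ${\rm Tr}_1^k(z)=0$ and $f^{(z)}(x_1,x_2)={\rm Tr}_1^m(x_2x_1^{2^m-2})$ if ${\rm Tr}_1^k(z)=1$. Then $f:\mathbb{F}_{2^m}\times\mathbb{F}_{2^m}\times\mathbb{F}_{2^k}\times\mathbb{F}_{2^k}\to\mathbb{F}_2$, $f(x_1,x_2,y,z)=f^{(z)}(x_1,x_2)+{\rm Tr}_1^k(yz)$, is a GMM function which is not in the class $MM^{\#}$.
   Context: ${\rm Tr}_a^b$ denotes the trace from $\mathbb{F}_{2^b}$ to $\mathbb{F}_{2^a}$. A GMM (generalized Maiorana–McFarland) function is one of the form $f(x,y,z)=f^{(z)}(x)+{\rm Tr}_1^k(yz)$ on $W\times\mathbb{F}_{2^k}\times\mathbb{F}_{2^k}$ with every $f^{(z)}$ bent on $W$. Two Boolean functions $f,g$ on an $\mathbb{F}_2$-space $X$ are EA-equivalent if $g(x)=f(L(x)+a)+\langle c,x\rangle+b$ with $L$ a linear permutation of $X$, $a,c\in X$, $b\in\mathbb{F}_2$. The Maiorana–McFarland class on $\mathbb{F}_{2^N}\times\mathbb{F}_{2^N}$ consists of functions ${\rm Tr}_1^N(x\pi(y))+g(y)$ with $\pi$ a permutation of $\mathbb{F}_{2^N}$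 and $g$ arbitrary; $MM^{\#}$ is the set of Boolean functions on a $2N$-dimensional $\mathbb{F}_2$-space EA-equivalent (after a linear identification with $\mathbb{F}_{2^N}^2$) to such a function. *)

theory Defs
  imports Main "HOL-Library.Product_Plus"
begin

text \<open>Finite fields F_{2^n} are modelled by a type of class field and finite with
  cardinality 2^n (unique up to isomorphism). Boolean functions take values in bool,
  with addition in F_2 being exclusive or (written as inequality of booleans).\<close>

definition Tr1 :: "nat \<Rightarrow> 'a::field \<Rightarrow> bool" where
  "Tr1 n x \<longleftrightarrow> (\<Sum>i<n. x ^ (2 ^ i)) = 1"

text \<open>F_2-linear maps between elementary abelian 2-groups are exactly the additive maps.\<close>
definition additive :: "('x::ab_group_add \<Rightarrow> 'y::ab_group_add) \<Rightarrow> bool" where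
  "additive L \<longleftrightarrow> (\<forall>u v. L (u + v) = L u + L v)"

text \<open>F_2-linear functionals X to F_2 (these are exactly the maps x |-> <c,x>).\<close>
definition lin_functional :: "('x::ab_group_add \<Rightarrow> bool) \<Rightarrow> bool" where
  "lin_functional l \<longleftrightarrow> (\<forall>u v. l (u + v) = (l u \<noteq> l v))"

definition walsh :: "('x::{ab_group_add,finite} \<Rightarrow> bool) \<Rightarrow> ('x \<Rightarrow> bool) \<Rightarrow> int" where
  "walsh f l = (\<Sum>x\<in>UNIV. if f x \<noteq> l x then -1 else 1)"

definition bent :: "('x::{ab_group_add,finite} \<Rightarrow> bool) \<Rightarrow> bool" where
  "bent f \<longleftrightarrow> (\<forall>l. lin_functional l \<longrightarrow> (walsh f l)^2 = int (card (UNIV :: 'x set)))"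

definition is_GMM :: "nat \<Rightarrow> ('w::{ab_group_add,finite} \<times> 'b::field \<times> 'b \<Rightarrow> bool) \<Rightarrow> bool" where
  "is_GMM k f \<longleftrightarrow> (\<exists>F :: 'b \<Rightarrow> 'w \<Rightarrow> bool. (\<forall>z. bent (F z)) \<and>
      (\<forall>w y z. f (w, y, z) = (F z w \<noteq> Tr1 k (y * z))))"

definition EA_equiv :: "('x::ab_group_add \<Rightarrow> bool) \<Rightarrow> ('x \<Rightarrow> bool) \<Rightarrow> bool" where
  "EA_equiv f g \<longleftrightarrow> (\<exists>L a l b. additive L \<and> bij L \<and> lin_functional l \<and>
      (\<forall>x. g x = ((f (L x + a) \<noteq> l x) \<noteq> b)))"

definition MM :: "nat \<Rightarrow> ('c::field \<times> 'c \<Rightarrow> bool) \<Rightarrow> bool" where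
  "MM N h \<longleftrightarrow> (\<exists>\<pi> g. bij \<pi> \<and> (\<forall>x y. h (x, y) = (Tr1 N (x * \<pi> y) \<noteq> g y)))"

text \<open>MM#: EA-equivalent, after a linear identification phi with F_{2^N}^2, to an MM function.
  The field F_{2^N} is given by the type 'c.\<close>
definition MM_sharp :: "nat \<Rightarrow> 'c::field itself \<Rightarrow> ('x::ab_group_add \<Rightarrow> bool) \<Rightarrow> bool" where
  "MM_sharp N T f \<longleftrightarrow> (\<exists>(\<phi> :: 'x \<Rightarrow> 'c \<times> 'c) h. additive \<phi> \<and> bij \<phi> \<and> MM N h \<and>
      EA_equiv f (h \<circ> \<phi>))"

definition fz :: "nat \<Rightarrow> nat \<Rightarrow> 'b::field \<Rightarrow> 'a::field \<times> 'a \<Rightarrow> bool" where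
  "fz m k z = (\<lambda>(x1, x2). if \<not> Tr1 k z then Tr1 m (x1 * x2 ^ (2 ^ m - 2))
                                       else Tr1 m (x2 * x1 ^ (2 ^ m - 2)))"

definition cor_f :: "nat \<Rightarrow> nat \<Rightarrow> ('a::field \<times> 'a) \<times> 'b::field \<times> 'b \<Rightarrow> bool" where
  "cor_f m k = (\<lambda>(x, y, z). fz m k z x \<noteq> Tr1 k (y * z))"

end

theory Submission
  imports Defs "HOL-Computational_Algebra.Polynomial"
begin

text \<open>Each f^(z) is the Maiorana-McFarland function Tr(x1/x2) of the inversion permutation,
  possibly with its arguments swapped, hence bent.

  An MM function Tr(x \<pi>(y)) + g(y) has vanishing second derivatives D_a D_b in all directions
  a, b of the subspace F \<times> 0, and this property survives EA-equivalence and linear changes of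
  coordinates. So a function in MM# on a space of order 2^(2N) admits a subgroup V of order 2^N
  along which all its second derivatives vanish. For our f we have N = m + k, and V meets the
  subspace of directions (x1, x2, 0, 0) in a subgroup S of order at least 2^(m+k) / 2^(2k) \<ge> 8.
  Restricted to z = 0, the vanishing of D_a D_b Tr(x1/x2) for a, b \<in> S forces the second
  coordinates of a and b to be 0 or equal; restricted to some z with Tr(z) = 1 the same holds for
  the first coordinates. Hence |S| \<le> 4, a contradiction.\<close>

section \<open>Finite fields of order 2^n\<close>

lemma power_card_minus_one_eq_1:
  fixes x :: "'a::{field,finite}"
  assumes "x \<noteq> 0"
  shows "x ^ (card (UNIV :: 'a set) - 1) = 1"
proof -
  let ?U = "UNIV - {0 :: 'a}"
  have "(\<Prod>y\<in>?U. x * y) = (\<Prod>y\<in>?U. y)"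
    by (rule prod.reindex_bij_witness[of _ "\<lambda>y. y / x" "\<lambda>y. x * y"]) (use assms in auto)
  moreover have "(\<Prod>y\<in>?U. x * y) = x ^ card ?U * (\<Prod>y\<in>?U. y)"
    by (simp add: prod.distrib)
  moreover have "card ?U = card (UNIV :: 'a set) - 1"
    by (simp add: card_Diff_singleton)
  ultimately show ?thesis
    by simp
qed

lemma power_card_eq_self:
  fixes x :: "'a::{field,finite}"
  shows "x ^ card (UNIV :: 'a set) = x"
proof (cases "x = 0")
  case False
  have "card (UNIV :: 'a set) = Suc (card (UNIV :: 'a set) - 1)"
    using finite_UNIV_card_ge_0[where 'a = 'a] by simp
  then have "x ^ card (UNIV :: 'a set) = x * x ^ (card (UNIV :: 'a set) - 1)"
    by (metis power_Suc)
  then show ?thesis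
    using power_card_minus_one_eq_1[OF False] by simp
qed (simp add: finite_UNIV_card_ge_0)

lemma inverse_eq_power:
  fixes x :: "'a::{field,finite}"
  assumes "card (UNIV :: 'a set) = 2 ^ n" "n \<ge> 2"
  shows "inverse x = x ^ (2 ^ n - 2)"
proof -
  have "(4::nat) \<le> 2 ^ n"
    using power_increasing[OF assms(2), of "2::nat"] by simp
  then have exponent: "2 ^ n - 1 = Suc (2 ^ n - 2)" "2 ^ n - 2 \<noteq> (0::nat)"
    by auto
  show ?thesis
  proof (cases "x = 0")
    case False
    then have "x * x ^ (2 ^ n - 2) = 1"
      using power_card_minus_one_eq_1[OF False] assms(1) exponent(1) by simp
    then show ?thesis
      by (rule inverse_unique)
  qed (use exponent(2) in simp)
qed

lemma two_eq_zero:
  assumes "card (UNIV :: 'a::{field,finite} set) = 2 ^ n" "n > 0"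
  shows "(2::'a) = 0"
proof -
  have "odd (card (UNIV :: 'a set) - 1)"
    using assms by simp
  then have "(-1::'a) = (-1) ^ (card (UNIV :: 'a set) - 1)"
    by simp
  also have "\<dots> = 1"
    by (rule power_card_minus_one_eq_1) simp
  finally show ?thesis
    by (metis add_eq_0_iff2 one_add_one)
qed

lemma power_two_power_add:
  fixes x y :: "'a::field"
  assumes two: "(2::'a) = 0"
  shows "(x + y) ^ 2 ^ i = x ^ 2 ^ i + y ^ 2 ^ i"
proof (induction i)
  case (Suc i)
  have "(x + y) ^ 2 ^ Suc i = ((x + y) ^ 2 ^ i)\<^sup>2"
    by (simp add: power_mult[symmetric] mult.commute)
  also have "\<dots> = (x ^ 2 ^ i)\<^sup>2 + (y ^ 2 ^ i)\<^sup>2"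
    using Suc two by (simp add: power2_sum)
  also have "\<dots> = x ^ 2 ^ Suc i + y ^ 2 ^ Suc i"
    by (simp add: power_mult[symmetric] mult.commute)
  finally show ?case .
qed simp

lemma sum_power_two_power:
  fixes f :: "'i \<Rightarrow> 'a::field"
  assumes "(2::'a) = 0"
  shows "(\<Sum>i\<in>A. f i) ^ 2 ^ j = (\<Sum>i\<in>A. f i ^ 2 ^ j)"
  by (induction A rule: infinite_finite_induct)
    (simp_all add: power_two_power_add[OF assms])

section \<open>The absolute trace\<close>

definition trace :: "nat \<Rightarrow> 'a::field \<Rightarrow> 'a" where
  "trace n x = (\<Sum>i<n. x ^ 2 ^ i)"

lemma Tr1_iff_trace: "Tr1 n x \<longleftrightarrow> trace n x = 1"
  by (simp add: Tr1_def trace_def)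

lemma trace_add:
  assumes "(2::'a::field) = 0"
  shows "trace n (x + y :: 'a) = trace n x + trace n y"
  by (simp add: trace_def power_two_power_add[OF assms] sum.distrib)

lemma trace_eq_0_or_1:
  fixes x :: "'a::{field,finite}"
  assumes "card (UNIV :: 'a set) = 2 ^ n" "n > 0"
  shows "trace n x = 0 \<or> trace n x = 1"
proof -
  have "(trace n x)\<^sup>2 = (\<Sum>i<n. x ^ 2 ^ Suc i)"
    using sum_power_two_power[OF two_eq_zero[OF assms], of "\<lambda>i. x ^ 2 ^ i" _ 1]
    by (simp add: trace_def power_mult[symmetric] mult.commute)
  also have "\<dots> = trace n x + x ^ 2 ^ n - x"
    unfolding trace_def using sum.lessThan_Suc_shift[of "\<lambda>i. x ^ 2 ^ i" n] by simp
  also have "x ^ 2 ^ n = x"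
    using power_card_eq_self[of x] assms(1) by simp
  finally have "trace n x * (trace n x - 1) = 0"
    by (simp add: power2_eq_square algebra_simps)
  then show ?thesis
    by auto
qed

lemma Tr1_add:
  fixes x y :: "'a::{field,finite}"
  assumes "card (UNIV :: 'a set) = 2 ^ n" "n > 0"
  shows "Tr1 n (x + y) \<longleftrightarrow> Tr1 n x \<noteq> Tr1 n y"
proof -
  have two: "(2::'a) = 0"
    by (rule two_eq_zero[OF assms])
  then have "(1::'a) + 1 = 0"
    by simp
  then show ?thesis
    unfolding Tr1_iff_trace trace_add[OF two]
    using trace_eq_0_or_1[OF assms, of x] trace_eq_0_or_1[OF assms, of y] by auto
qed

lemma not_Tr1_0: "n > 0 \<Longrightarrow> \<not> Tr1 n (0::'a::field)"
  by (simp add: Tr1_def power_0_left)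

text \<open>The trace is a nonzero polynomial of degree 2^(n-1) < 2^n, so it cannot vanish everywhere.\<close>
lemma ex_Tr1:
  assumes "card (UNIV :: 'a::{field,finite} set) = 2 ^ n" "n > 0"
  shows "\<exists>s::'a. Tr1 n s"
proof (rule ccontr)
  assume "\<not> ?thesis"
  then have roots: "{x. trace n x = 0} = (UNIV :: 'a set)"
    using trace_eq_0_or_1[OF assms] by (auto simp: Tr1_iff_trace)
  define p :: "'a poly" where "p = (\<Sum>i<n. monom 1 (2 ^ i))"
  have poly_p: "poly p = trace n"
    by (simp add: fun_eq_iff p_def poly_sum poly_monom trace_def)
  have coeff_p: "coeff p j = (\<Sum>i<n. if 2 ^ i = j then 1 else 0)" for j
    by (simp add: p_def coeff_sum coeff_monom)
  have "coeff p (2 ^ (n - 1)) = 1"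
    unfolding coeff_p using assms(2)
    by (subst sum.mono_neutral_cong_right[of _ "{n - 1}"]) auto
  then have "p \<noteq> 0"
    by auto
  have "degree p \<le> 2 ^ (n - 1)"
  proof (rule degree_le, intro allI impI)
    fix j :: nat
    assume "2 ^ (n - 1) < j"
    moreover have "(2::nat) ^ i \<le> 2 ^ (n - 1)" if "i < n" for i
      using that by (intro power_increasing) auto
    ultimately show "coeff p j = 0"
      unfolding coeff_p by (intro sum.neutral) fastforce
  qed
  moreover have "card {x. poly p x = 0} \<le> degree p"
    by (rule card_poly_roots_bound) fact
  ultimately have "(2::nat) ^ n \<le> 2 ^ (n - 1)"
    using assms(1) roots poly_p by (simp del: power_increasing_iff)
  then show False
    using assms(2) by simp
qed

section \<open>Character sums and bent functions\<close>

definition chi :: "bool \<Rightarrow> int" where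
  "chi b = (if b then -1 else 1)"

lemma chi_xor: "chi (a \<noteq> b) = chi a * chi b"
  by (simp add: chi_def)

lemma walsh_eq_sum_chi: "walsh f l = (\<Sum>x\<in>UNIV. chi (f x \<noteq> l x))"
  by (simp add: walsh_def chi_def)

lemma lin_functional_xor:
  "lin_functional l1 \<Longrightarrow> lin_functional l2 \<Longrightarrow> lin_functional (\<lambda>x. l1 x \<noteq> l2 x)"
  unfolding lin_functional_def by auto

lemma lin_functional_zero: "lin_functional l \<Longrightarrow> \<not> l 0"
  unfolding lin_functional_def by (metis add_0)

lemma sum_chi_lin_functional:
  fixes l :: "'x::{ab_group_add,finite} \<Rightarrow> bool"
  assumes "lin_functional l"
  shows "(\<Sum>x\<in>UNIV. chi (l x)) = (if \<forall>x. \<not> l x then int (card (UNIV :: 'x set)) else 0)"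
proof (cases "\<forall>x. \<not> l x")
  case False
  then obtain u where "l u"
    by auto
  then have "chi (l (x + u)) = - chi (l x)" for x
    using assms unfolding lin_functional_def chi_def by auto
  moreover have "(\<Sum>x\<in>UNIV. chi (l (x + u))) = (\<Sum>x\<in>UNIV. chi (l x))"
    by (rule sum.reindex_bij_witness[of _ "\<lambda>x. x - u" "\<lambda>x. x + u"]) auto
  ultimately show ?thesis
    using False by (simp add: sum_negf)
qed (simp add: chi_def)

lemma lin_functional_Tr1_mult:
  fixes c :: "'a::{field,finite}"
  assumes "card (UNIV :: 'a set) = 2 ^ n" "n > 0"
  shows "lin_functional (\<lambda>x. Tr1 n (x * c))"
  unfolding lin_functional_def by (simp add: Tr1_add[OF assms] distrib_right)

lemma Tr1_mult_eq_False_iff: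
  fixes c :: "'a::{field,finite}"
  assumes "card (UNIV :: 'a set) = 2 ^ n" "n > 0"
  shows "(\<forall>x. \<not> Tr1 n (x * c)) \<longleftrightarrow> c = 0"
proof
  assume none: "\<forall>x. \<not> Tr1 n (x * c)"
  obtain s :: 'a where "Tr1 n s"
    using ex_Tr1[OF assms] by blast
  then show "c = 0"
    using none[rule_format, of "s / c"] by (cases "c = 0") simp_all
qed (simp add: not_Tr1_0[OF assms(2)])

lemma sum_chi_Tr1_mult:
  fixes c :: "'a::{field,finite}"
  assumes "card (UNIV :: 'a set) = 2 ^ n" "n > 0"
  shows "(\<Sum>x\<in>UNIV. chi (Tr1 n (x * c))) = (if c = 0 then int (card (UNIV :: 'a set)) else 0)"
  using sum_chi_lin_functional[OF lin_functional_Tr1_mult[OF assms]]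
  by (simp add: Tr1_mult_eq_False_iff[OF assms])

text \<open>The sum over all c of the character sums of x \<mapsto> Tr(x c) + l(x) equals |F| by
  orthogonality, so one of them is nonzero.\<close>
lemma lin_functional_eq_Tr1_mult:
  fixes l :: "'a::{field,finite} \<Rightarrow> bool"
  assumes "card (UNIV :: 'a set) = 2 ^ n" "n > 0" "lin_functional l"
  obtains c where "\<And>x. l x = Tr1 n (x * c)"
proof -
  let ?q = "int (card (UNIV :: 'a set))"
  have "(\<Sum>c\<in>UNIV. \<Sum>x\<in>UNIV. chi (Tr1 n (x * c) \<noteq> l x))
      = (\<Sum>x\<in>UNIV. chi (l x) * (\<Sum>c\<in>UNIV. chi (Tr1 n (x * c))))"
    unfolding chi_xor sum_distrib_left by (subst sum.swap) (simp add: mult.commute)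
  also have "\<dots> = (\<Sum>x\<in>UNIV. chi (l x) * (if x = 0 then ?q else 0))"
    using sum_chi_Tr1_mult[OF assms(1,2)] by (simp add: mult.commute)
  also have "\<dots> = ?q"
    using lin_functional_zero[OF assms(3)]
    by (simp add: if_distrib[of "\<lambda>t. chi (l _) * t"] cong: if_cong) (simp add: chi_def)
  finally have "(\<Sum>c\<in>UNIV. \<Sum>x\<in>UNIV. chi (Tr1 n (x * c) \<noteq> l x)) \<noteq> 0"
    by simp
  then obtain c where "(\<Sum>x\<in>UNIV. chi (Tr1 n (x * c) \<noteq> l x)) \<noteq> 0"
    by (meson sum.neutral)
  then have "\<forall>x. l x = Tr1 n (x * c)"
    using sum_chi_lin_functional[OF
        lin_functional_xor[OF lin_functional_Tr1_mult[OF assms(1,2)] assms(3)]]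
    by (auto split: if_splits)
  then show ?thesis
    using that by blast
qed

lemma lin_functional_Pair:
  assumes "lin_functional l"
  shows "l (x, y) \<longleftrightarrow> l (x, 0) \<noteq> l (0, y)"
  using assms[unfolded lin_functional_def, rule_format, of "(x, 0)" "(0, y)"] by simp

lemma lin_functional_Pair_left:
  "lin_functional l \<Longrightarrow> lin_functional (\<lambda>x. l (x, 0))"
  unfolding lin_functional_def by (metis add_0 add_Pair)

lemma bent_Tr1_mult_bij:
  fixes \<pi> :: "'a::{field,finite} \<Rightarrow> 'a"
  assumes "card (UNIV :: 'a set) = 2 ^ n" "n > 0" "bij \<pi>"
  shows "bent (\<lambda>(x, y). Tr1 n (x * \<pi> y))"
  unfolding bent_def
proof (intro allI impI)
  fix l :: "'a \<times> 'a \<Rightarrow> bool"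
  assume l: "lin_functional l"
  obtain c where c: "\<And>x. l (x, 0) = Tr1 n (x * c)"
    using lin_functional_eq_Tr1_mult[OF assms(1,2) lin_functional_Pair_left[OF l]] by blast
  let ?q = "int (card (UNIV :: 'a set))"
  have inner: "(\<Sum>x\<in>UNIV. chi (Tr1 n (x * \<pi> y) \<noteq> l (x, 0))) = (if \<pi> y = c then ?q else 0)"
    for y
  proof -
    have "Tr1 n (x * \<pi> y) \<noteq> Tr1 n (x * c) \<longleftrightarrow> Tr1 n (x * (\<pi> y - c))" for x
      using Tr1_add[OF assms(1,2), of "x * (\<pi> y - c)" "x * c"] by (auto simp: right_diff_distrib)
    then show ?thesis
      using sum_chi_Tr1_mult[OF assms(1,2), of "\<pi> y - c"] by (simp add: c)
  qed
  have "walsh (\<lambda>(x, y). Tr1 n (x * \<pi> y)) l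
      = (\<Sum>x\<in>UNIV. \<Sum>y\<in>UNIV. chi (Tr1 n (x * \<pi> y) \<noteq> l (x, y)))"
    unfolding walsh_eq_sum_chi UNIV_Times_UNIV[symmetric] sum.cartesian_product
    by (simp add: split_def)
  also have "\<dots> = (\<Sum>y\<in>UNIV. \<Sum>x\<in>UNIV. chi (Tr1 n (x * \<pi> y) \<noteq> l (x, y)))"
    by (rule sum.swap)
  also have "\<dots> = (\<Sum>y\<in>UNIV. chi (l (0, y)) * (\<Sum>x\<in>UNIV. chi (Tr1 n (x * \<pi> y) \<noteq> l (x, 0))))"
    unfolding sum_distrib_left chi_xor[symmetric]
    by (intro sum.cong refl arg_cong[where f = chi]) (use lin_functional_Pair[OF l] in blast)
  also have "\<dots> = chi (l (0, inv \<pi> c)) * ?q"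
    unfolding inner
    by (simp add: if_distrib[of "\<lambda>t. chi (l _) * t"] bij_inv_eq_iff[OF assms(3), symmetric]
        cong: if_cong)
  finally show "(walsh (\<lambda>(x, y). Tr1 n (x * \<pi> y)) l)\<^sup>2 = int (card (UNIV :: ('a \<times> 'a) set))"
    by (simp add: power2_eq_square chi_def card_cartesian_product flip: UNIV_Times_UNIV)
qed

lemma additive_inv:
  assumes "Defs.additive L" "bij L"
  shows "Defs.additive (inv L)"
  unfolding Defs.additive_def
proof (intro allI)
  fix u v
  have "L (inv L u + inv L v) = u + v"
    using assms by (simp add: Defs.additive_def bij_is_surj surj_f_inv_f)
  then show "inv L (u + v) = inv L u + inv L v"
    using assms(2) by (metis bij_inv_eq_iff)
qed

lemma bent_comp_additive_bij:
  fixes L :: "'x::{ab_group_add,finite} \<Rightarrow> 'y::{ab_group_add,finite}"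
  assumes "bent g" "Defs.additive L" "bij L"
  shows "bent (g \<circ> L)"
  unfolding bent_def
proof (intro allI impI)
  fix l :: "'x \<Rightarrow> bool"
  assume "lin_functional l"
  then have "lin_functional (l \<circ> inv L)"
    using additive_inv[OF assms(2,3)] by (simp add: lin_functional_def Defs.additive_def)
  then have "(walsh g (l \<circ> inv L))\<^sup>2 = int (card (UNIV :: 'y set))"
    using assms(1) by (simp add: bent_def)
  moreover have "walsh g (l \<circ> inv L) = walsh (g \<circ> L) l"
    unfolding walsh_def using assms(3)
    by (intro sum.reindex_bij_witness[of _ "L" "inv L"])
      (simp_all add: inv_f_f[OF bij_is_inj[OF assms(3)]] surj_f_inv_f[OF bij_is_surj[OF assms(3)]])
  moreover have "card (UNIV :: 'y set) = card (UNIV :: 'x set)"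
    using bij_betw_same_card[OF assms(3)] by simp
  ultimately show "(walsh (g \<circ> L) l)\<^sup>2 = int (card (UNIV :: 'x set))"
    by simp
qed

lemma additive_swap: "Defs.additive prod.swap"
  by (simp add: Defs.additive_def)

definition Tr1_div :: "nat \<Rightarrow> 'a::field \<times> 'a \<Rightarrow> bool" where
  "Tr1_div n = (\<lambda>(x, y). Tr1 n (x / y))"

lemma bent_Tr1_div:
  assumes "card (UNIV :: 'a::{field,finite} set) = 2 ^ n" "n > 0"
  shows "bent (Tr1_div n :: 'a \<times> 'a \<Rightarrow> bool)"
proof -
  have "bij (inverse :: 'a \<Rightarrow> 'a)"
    by (rule o_bij[of inverse]) (auto simp: fun_eq_iff)
  then show ?thesis
    using bent_Tr1_mult_bij[OF assms] by (simp add: Tr1_div_def divide_inverse)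
qed

lemma fz_eq_Tr1_div:
  assumes "card (UNIV :: 'a::{field,finite} set) = 2 ^ m" "m \<ge> 2"
  shows "(fz m k z :: 'a \<times> 'a \<Rightarrow> bool)
    = (if Tr1 k z then Tr1_div m \<circ> prod.swap else Tr1_div m)"
  by (simp add: fun_eq_iff fz_def Tr1_div_def divide_inverse inverse_eq_power[OF assms])

lemma is_GMM_cor_f:
  assumes "card (UNIV :: 'a::{field,finite} set) = 2 ^ m" "m \<ge> 2"
  shows "is_GMM k (cor_f m k :: ('a \<times> 'a) \<times> 'b::field \<times> 'b \<Rightarrow> bool)"
  unfolding is_GMM_def
proof (intro exI[of _ "fz m k"] conjI allI)
  have bent: "bent (Tr1_div m :: 'a \<times> 'a \<Rightarrow> bool)"
    using bent_Tr1_div[OF assms(1)] assms(2) by simp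
  show "bent (fz m k z :: 'a \<times> 'a \<Rightarrow> bool)" for z :: 'b
    using bent bent_comp_additive_bij[OF bent additive_swap bij_swap]
    by (simp add: fz_eq_Tr1_div[OF assms])
qed (simp add: cor_f_def)

section \<open>Second derivatives and the class MM#\<close>

definition second_derivative :: "('x::plus \<Rightarrow> bool) \<Rightarrow> 'x \<Rightarrow> 'x \<Rightarrow> 'x \<Rightarrow> bool" where
  "second_derivative f a b w \<longleftrightarrow> (f w \<noteq> f (w + a)) \<noteq> (f (w + b) \<noteq> f (w + a + b))"

definition second_derivatives_vanish_on :: "('x::plus \<Rightarrow> bool) \<Rightarrow> 'x set \<Rightarrow> bool" where
  "second_derivatives_vanish_on f V \<longleftrightarrow> (\<forall>a\<in>V. \<forall>b\<in>V. \<forall>w. \<not> second_derivative f a b w)"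

lemma second_derivative_comp_additive:
  assumes "Defs.additive L"
  shows "second_derivative (f \<circ> L) a b w = second_derivative f (L a) (L b) (L w)"
  using assms by (simp add: second_derivative_def Defs.additive_def)

lemma second_derivative_affine_change:
  assumes "Defs.additive L" "lin_functional l"
  shows "second_derivative (\<lambda>x. (f (L x + c) \<noteq> l x) \<noteq> d) a b w
    = second_derivative f (L a) (L b) (L w + c)"
proof -
  have L_shift: "L (w + a) + c = L w + c + L a" "L (w + b) + c = L w + c + L b"
    "L (w + a + b) + c = L w + c + L a + L b"
    using assms(1) by (simp_all add: Defs.additive_def ac_simps)
  have l_shift: "l (w + a) = (l w \<noteq> l a)" "l (w + b) = (l w \<noteq> l b)"
    "l (w + a + b) = ((l w \<noteq> l a) \<noteq> l b)"
    using assms(2) by (simp_all add: lin_functional_def)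
  show ?thesis
    unfolding second_derivative_def L_shift l_shift by argo
qed

lemma second_derivative_Pair_zero:
  fixes f :: "'x::plus \<times> 'y::monoid_add \<Rightarrow> bool"
  shows "second_derivative f (a, 0) (b, 0) (x, q) = second_derivative (\<lambda>x. f (x, q)) a b x"
  by (simp add: second_derivative_def)

lemma second_derivatives_vanish_on_slice:
  fixes f :: "'x::plus \<times> 'y::monoid_add \<Rightarrow> bool"
  assumes "second_derivatives_vanish_on f V"
  shows "second_derivatives_vanish_on (\<lambda>x. f (x, q)) {x. (x, 0) \<in> V}"
  using assms by (simp add: second_derivatives_vanish_on_def flip: second_derivative_Pair_zero)

lemma additive_diff: "Defs.additive L \<Longrightarrow> L (u - v) = L u - L v"
  unfolding Defs.additive_def by (metis add_diff_cancel diff_add_cancel)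

lemma MM_second_derivatives_vanish:
  fixes h :: "'c::{field,finite} \<times> 'c \<Rightarrow> bool"
  assumes "card (UNIV :: 'c set) = 2 ^ N" "N > 0" "MM N h"
  shows "second_derivatives_vanish_on h (range (\<lambda>u. (u, 0)))"
proof -
  obtain \<pi> g where h: "\<And>x y. h (x, y) = (Tr1 N (x * \<pi> y) \<noteq> g y)"
    using assms(3) unfolding MM_def by blast
  show ?thesis
    unfolding second_derivatives_vanish_on_def
  proof (intro ballI allI)
    fix a b w :: "'c \<times> 'c"
    assume "a \<in> range (\<lambda>u. (u, 0))" "b \<in> range (\<lambda>u. (u, 0))"
    then show "\<not> second_derivative h a b w"
      by (cases w) (auto simp: second_derivative_def h distrib_right Tr1_add[OF assms(1,2)])
  qed
qed

lemma second_derivatives_vanish_on_comp: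
  assumes "Defs.additive \<phi>" "second_derivatives_vanish_on h V"
  shows "second_derivatives_vanish_on (h \<circ> \<phi>) (\<phi> -` V)"
  using assms by (simp add: second_derivatives_vanish_on_def second_derivative_comp_additive)

lemma second_derivatives_vanish_on_EA:
  assumes "Defs.additive L" "surj L" "lin_functional l"
    and "\<And>x. g x = ((f (L x + c) \<noteq> l x) \<noteq> d)" "second_derivatives_vanish_on g V"
  shows "second_derivatives_vanish_on f (L ` V)"
  unfolding second_derivatives_vanish_on_def
proof (intro ballI allI)
  fix a' b' w
  assume "a' \<in> L ` V" "b' \<in> L ` V"
  then obtain a b where "a \<in> V" "b \<in> V" "a' = L a" "b' = L b"
    by blast
  obtain x where w: "w = L x + c"
    using surjD[OF assms(2), of "w - c"] by (metis diff_add_cancel)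
  have "g = (\<lambda>x. (f (L x + c) \<noteq> l x) \<noteq> d)"
    using assms(4) by blast
  then have "second_derivative g a b x = second_derivative f (L a) (L b) w"
    using second_derivative_affine_change[OF assms(1,3), of f c d a b x] w by simp
  then show "\<not> second_derivative f a' b' w"
    using assms(5) \<open>a' = L a\<close> \<open>b' = L b\<close> \<open>a \<in> V\<close> \<open>b \<in> V\<close>
    unfolding second_derivatives_vanish_on_def by blast
qed

lemma MM_sharp_imp_second_derivatives_vanish:
  fixes f :: "'x::ab_group_add \<Rightarrow> bool"
  assumes "MM_sharp N TYPE('c::{field,finite}) f" "card (UNIV :: 'c set) = 2 ^ N" "N > 0"
  obtains V where "\<forall>a\<in>V. \<forall>b\<in>V. a - b \<in> V" "card V = 2 ^ N"
    "second_derivatives_vanish_on f V"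
proof -
  obtain \<phi> :: "'x \<Rightarrow> 'c \<times> 'c" and h L c l d
    where \<phi>: "Defs.additive \<phi>" "bij \<phi>" and "MM N h"
    and L: "Defs.additive L" "bij L" and l: "lin_functional l"
    and eq: "\<And>x. (h \<circ> \<phi>) x = ((f (L x + c) \<noteq> l x) \<noteq> d)"
    using assms(1) unfolding MM_sharp_def EA_equiv_def by blast
  define V where "V = L ` \<phi> -` range (\<lambda>u. (u, 0))"
  have "\<forall>a\<in>V. \<forall>b\<in>V. a - b \<in> V"
  proof (intro ballI)
    fix a b
    assume "a \<in> V" "b \<in> V"
    then obtain x y where "a = L x" "b = L y"
      and "\<phi> x \<in> range (\<lambda>u. (u, 0))" "\<phi> y \<in> range (\<lambda>u. (u, 0))"
      unfolding V_def by blast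
    then have "\<phi> (x - y) \<in> range (\<lambda>u. (u, 0))"
      by (auto simp: additive_diff[OF \<phi>(1)])
    then show "a - b \<in> V"
      unfolding V_def \<open>a = L x\<close> \<open>b = L y\<close> additive_diff[OF L(1), symmetric] by blast
  qed
  moreover have "card V = 2 ^ N"
    unfolding V_def
    by (simp add: card_image[OF inj_on_subset[OF bij_is_inj[OF L(2)]]]
        card_vimage_inj[OF bij_is_inj[OF \<phi>(2)]] bij_is_surj[OF \<phi>(2)]
        card_image inj_on_def assms(2))
  moreover have "second_derivatives_vanish_on f V"
    unfolding V_def
    using second_derivatives_vanish_on_EA[OF L(1) bij_is_surj[OF L(2)] l eq
        second_derivatives_vanish_on_comp[OF \<phi>(1)
          MM_second_derivatives_vanish[OF assms(2,3) \<open>MM N h\<close>]]] .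
  ultimately show ?thesis
    using that by blast
qed

section \<open>Second derivatives of Tr(x/y)\<close>

lemma sum_inverse_translates_char_2:
  fixes y u v :: "'a::field"
  assumes "(2::'a) = 0" "y \<noteq> 0" "y + u \<noteq> 0" "y + v \<noteq> 0" "y + u + v \<noteq> 0"
  shows "inverse y + inverse (y + u) + inverse (y + v) + inverse (y + u + v)
    = u * v * (u + v) / (y * (y + u) * (y + v) * (y + u + v))"
proof -
  have "inverse a + inverse b + inverse c + inverse d
      = (b * c * d + a * c * d + a * b * d + a * b * c) / (a * b * c * d)"
    if "a \<noteq> 0" "b \<noteq> 0" "c \<noteq> 0" "d \<noteq> 0" for a b c d :: 'a
    using that by (simp add: field_simps)
  then have "inverse y + inverse (y + u) + inverse (y + v) + inverse (y + u + v)
    = ((y + u) * (y + v) * (y + u + v) + y * (y + v) * (y + u + v)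
      + y * (y + u) * (y + u + v) + y * (y + u) * (y + v)) / (y * (y + u) * (y + v) * (y + u + v))"
    using assms(2-5) by simp
  moreover have "(y + u) * (y + v) * (y + u + v) + y * (y + v) * (y + u + v)
      + y * (y + u) * (y + u + v) + y * (y + u) * (y + v) - u * v * (u + v)
    = 2 * (2 * y^3 + 3 * y^2 * u + 3 * y^2 * v + y * u^2 + 3 * y * u * v + y * v^2)"
    by algebra
  ultimately show ?thesis
    using assms(1) by simp
qed

lemma ex_sum_inverse_translates_ne_0:
  fixes u v :: "'a::{field,finite}"
  assumes "card (UNIV :: 'a set) = 2 ^ n" "n \<ge> 3" "u \<noteq> 0" "v \<noteq> 0" "u \<noteq> v"
  shows "\<exists>y. inverse y + inverse (y + u) + inverse (y + v) + inverse (y + u + v) \<noteq> 0"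
proof -
  have two: "(2::'a) = 0"
    using two_eq_zero[OF assms(1)] assms(2) by simp
  have add_eq_0: "a + b = 0 \<longleftrightarrow> a = b" for a b :: 'a
    using two by (metis add_eq_0_iff2 mult_2 mult_zero_left)
  have "card {0, u, v, u + v} < card (UNIV :: 'a set)"
  proof -
    have "card (set [0, u, v, u + v]) \<le> 4"
      using card_length[of "[0, u, v, u + v]"] by simp
    moreover have "(8::nat) \<le> 2 ^ n"
      using power_increasing[OF assms(2), of "2::nat"] by simp
    ultimately show ?thesis
      using assms(1) by simp
  qed
  then have "\<not> UNIV \<subseteq> {0, u, v, u + v}"
    using card_mono[of "{0, u, v, u + v}" UNIV] by auto
  then obtain y where "y \<notin> {0, u, v, u + v}"
    by blast
  then have nz: "y \<noteq> 0" "y + u \<noteq> 0" "y + v \<noteq> 0" "y + u + v \<noteq> 0"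
    unfolding add_eq_0 add.assoc[of y] by auto
  moreover have "u + v \<noteq> 0"
    using assms(5) add_eq_0 by blast
  ultimately show ?thesis
    using sum_inverse_translates_char_2[OF two nz] assms(3,4) by (intro exI[of _ y]) simp
qed

text \<open>The second derivative of Tr(x/y) is Tr(x S(y)) plus a term independent of x, where S(y)
  is the sum of the inverses of the translates y + t, t \<in> {0, u, v, u + v}.\<close>
lemma second_derivative_Tr1_div_vanishes_imp:
  fixes p q u v :: "'a::{field,finite}"
  assumes "card (UNIV :: 'a set) = 2 ^ n" "n \<ge> 3"
    and "\<forall>w. \<not> second_derivative (Tr1_div n) (p, u) (q, v) w"
  shows "u = 0 \<or> v = 0 \<or> u = v"
proof (rule ccontr)
  assume "\<not> (u = 0 \<or> v = 0 \<or> u = v)"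
  define S where "S y = inverse y + inverse (y + u) + inverse (y + v) + inverse (y + u + v)" for y
  obtain y where "S y \<noteq> 0"
    using ex_sum_inverse_translates_ne_0[OF assms(1,2)] \<open>\<not> (u = 0 \<or> v = 0 \<or> u = v)\<close> by (auto simp: S_def)
  have n: "n > 0"
    using assms(2) by simp
  have "second_derivative (Tr1_div n) (p, u) (q, v) (x, y)
      \<longleftrightarrow> Tr1 n (x * S y) \<noteq> second_derivative (Tr1_div n) (p, u) (q, v) (0, y)" for x
    using not_Tr1_0[OF n, where 'a = 'a]
    by (simp add: second_derivative_def Tr1_div_def S_def divide_inverse distrib_left
        distrib_right Tr1_add[OF assms(1) n] add.assoc) argo
  then have "\<forall>x. \<not> Tr1 n (x * S y)"
    using assms(3) by blast
  then show False
    using Tr1_mult_eq_False_iff[OF assms(1) n] \<open>S y \<noteq> 0\<close> by blast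
qed

section \<open>Slices of subgroups\<close>

lemma card_le_card_mult_slice:
  fixes V :: "('x::ab_group_add \<times> 'y::{ab_group_add,finite}) set"
  assumes "finite V" "\<forall>a\<in>V. \<forall>b\<in>V. a - b \<in> V"
  shows "card V \<le> card (UNIV :: 'y set) * card {x. (x, 0) \<in> V}"
proof -
  let ?S = "{x. (x, 0) \<in> V}"
  have "finite ?S"
    by (rule finite_subset[of _ "fst ` V"]) (use assms(1) in force)+
  \<comment> \<open>Subtracting one point of a fibre of snd maps the fibre injectively into the slice.\<close>
  have fibre: "card {e \<in> V. snd e = q} \<le> card ?S" for q
  proof (cases "{e \<in> V. snd e = q} = {}")
    case False
    then obtain e0 where e0: "e0 \<in> V" "snd e0 = q"
      by blast
    have "inj_on (\<lambda>e. fst e - fst e0) {e \<in> V. snd e = q}"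
      by (auto simp: inj_on_def prod_eq_iff)
    moreover have "(\<lambda>e. fst e - fst e0) ` {e \<in> V. snd e = q} \<subseteq> ?S"
    proof clarify
      fix e assume "e \<in> V" "q = snd e"
      then have "e - e0 \<in> V"
        using assms(2) e0 by blast
      moreover have "e - e0 = (fst e - fst e0, 0)"
        using \<open>q = snd e\<close> e0(2) by (simp add: prod_eq_iff)
      ultimately show "(fst e - fst e0, 0) \<in> V"
        by simp
    qed
    ultimately show ?thesis
      using card_inj_on_le \<open>finite ?S\<close> by blast
  next
    case True
    show ?thesis
      unfolding True by simp
  qed
  have "V = (\<Union>q. {e \<in> V. snd e = q})"
    by blast
  then have "card V \<le> (\<Sum>q\<in>UNIV. card {e \<in> V. snd e = q})"
    using card_UN_le[of UNIV "\<lambda>q. {e \<in> V. snd e = q}"] by simp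
  also have "\<dots> \<le> (\<Sum>q\<in>(UNIV :: 'y set). card ?S)"
    by (rule sum_mono) (rule fibre)
  finally show ?thesis
    by simp
qed

lemma card_le_2_if_zero_or_eq:
  fixes A :: "'a::zero set"
  assumes "\<forall>u\<in>A. \<forall>v\<in>A. u = 0 \<or> v = 0 \<or> u = v"
  shows "card A \<le> 2"
proof (cases "A \<subseteq> {0}")
  case True
  then show ?thesis
    using card_mono[OF _ True] by simp
next
  case False
  then obtain s where "s \<in> A" "s \<noteq> 0"
    by blast
  then have "A \<subseteq> {0, s}"
    using assms by blast
  then show ?thesis
    using card_mono[of "{0, s}" A] \<open>s \<noteq> 0\<close> by simp
qed

lemma cor_f_slice_card_le_4:
  fixes V :: "(('a::{field,finite} \<times> 'a) \<times> 'b::{field,finite} \<times> 'b) set"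
  assumes "card (UNIV :: 'a set) = 2 ^ m" "m \<ge> 3" "card (UNIV :: 'b set) = 2 ^ k" "k > 0"
    and "second_derivatives_vanish_on (cor_f m k) V"
  shows "card {x. (x, 0) \<in> V} \<le> 4"
proof -
  let ?S = "{x. (x, 0) \<in> V}"
  have fz: "fz m k z = (if Tr1 k z then Tr1_div m \<circ> prod.swap else Tr1_div m :: 'a \<times> 'a \<Rightarrow> bool)"
    for z :: 'b
    by (rule fz_eq_Tr1_div[OF assms(1)]) (use assms(2) in simp)
  have "fz m k z = (\<lambda>x :: 'a \<times> 'a. cor_f m k (x, 0, z))" for z :: 'b
    using not_Tr1_0[OF assms(4), where 'a = 'b] by (simp add: fun_eq_iff cor_f_def)
  then have "second_derivatives_vanish_on (fz m k z) ?S" for z :: 'b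
    using second_derivatives_vanish_on_slice[OF assms(5), of "(0, z)"] by simp
  then have vanish: "\<not> second_derivative (fz m k z) a b w" if "a \<in> ?S" "b \<in> ?S" for a b w and z :: 'b
    using that unfolding second_derivatives_vanish_on_def by blast
  have "\<forall>a\<in>?S. \<forall>b\<in>?S. snd a = 0 \<or> snd b = 0 \<or> snd a = snd b"
  proof (intro ballI)
    fix a b
    assume "a \<in> ?S" "b \<in> ?S"
    then have "\<forall>w. \<not> second_derivative (Tr1_div m) (fst a, snd a) (fst b, snd b) w"
      using vanish[where z = 0] fz[of 0] not_Tr1_0[OF assms(4), where 'a = 'b] by simp
    then show "snd a = 0 \<or> snd b = 0 \<or> snd a = snd b"
      by (rule second_derivative_Tr1_div_vanishes_imp[OF assms(1,2)])
  qed
  moreover have "\<forall>a\<in>?S. \<forall>b\<in>?S. fst a = 0 \<or> fst b = 0 \<or> fst a = fst b"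
  proof (intro ballI)
    fix a b
    assume "a \<in> ?S" "b \<in> ?S"
    obtain s :: 'b where "Tr1 k s"
      using ex_Tr1[OF assms(3,4)] by blast
    have "\<not> second_derivative (Tr1_div m) (snd a, fst a) (snd b, fst b) w" for w
      using vanish[OF \<open>a \<in> ?S\<close> \<open>b \<in> ?S\<close>, where w = "prod.swap w" and z = s] fz[of s] \<open>Tr1 k s\<close>
      by (simp add: second_derivative_comp_additive[OF additive_swap] prod.swap_def)
    then show "fst a = 0 \<or> fst b = 0 \<or> fst a = fst b"
      using second_derivative_Tr1_div_vanishes_imp[OF assms(1,2)] by blast
  qed
  ultimately have projections: "card (fst ` ?S) \<le> 2" "card (snd ` ?S) \<le> 2"
    by (intro card_le_2_if_zero_or_eq; blast)+
  have "card ?S \<le> card (fst ` ?S \<times> snd ` ?S)"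
    by (rule card_mono) (auto simp: mem_Times_iff image_iff)
  also have "\<dots> \<le> 2 * 2"
    unfolding card_cartesian_product using projections by (intro mult_mono) simp_all
  finally show ?thesis
    by simp
qed

theorem corollary3p10:
  fixes m k :: nat
  assumes "card (UNIV :: 'a::{field,finite} set) = 2 ^ m"
    and "card (UNIV :: 'b::{field,finite} set) = 2 ^ k"
    and "card (UNIV :: 'c::{field,finite} set) = 2 ^ (m + k)"
    and "k > 0" and "m \<ge> 4" and "m > k + 2"
  shows "is_GMM k (cor_f m k :: ('a \<times> 'a) \<times> 'b \<times> 'b \<Rightarrow> bool)
    \<and> \<not> MM_sharp (m + k) TYPE('c) (cor_f m k :: ('a \<times> 'a) \<times> 'b \<times> 'b \<Rightarrow> bool)"
proof
  show "is_GMM k (cor_f m k :: ('a \<times> 'a) \<times> 'b \<times> 'b \<Rightarrow> bool)"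
    using is_GMM_cor_f[OF assms(1)] assms(5) by simp
  show "\<not> MM_sharp (m + k) TYPE('c) (cor_f m k :: ('a \<times> 'a) \<times> 'b \<times> 'b \<Rightarrow> bool)"
  proof
    assume "MM_sharp (m + k) TYPE('c) (cor_f m k :: ('a \<times> 'a) \<times> 'b \<times> 'b \<Rightarrow> bool)"
    then obtain V :: "(('a \<times> 'a) \<times> 'b \<times> 'b) set" where "\<forall>a\<in>V. \<forall>b\<in>V. a - b \<in> V"
      and "card V = 2 ^ (m + k)" and "second_derivatives_vanish_on (cor_f m k) V"
      using MM_sharp_imp_second_derivatives_vanish[OF _ assms(3)] assms(4) by blast
    then have "2 ^ (m + k) \<le> card (UNIV :: ('b \<times> 'b) set) * card {x. (x, 0) \<in> V}"
      using card_le_card_mult_slice[of V] by simp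
    also have "\<dots> \<le> 2 ^ k * 2 ^ k * 4"
      using cor_f_slice_card_le_4[OF assms(1) _ assms(2,4) \<open>second_derivatives_vanish_on _ V\<close>]
        assms(2,5) by (simp add: card_cartesian_product flip: UNIV_Times_UNIV)
    also have "\<dots> = 2 ^ (k + k + 2)"
      by (simp add: power_add)
    finally have "m + k \<le> k + k + 2"
      by (rule power_le_imp_le_exp[rotated]) simp
    then show False
      using assms(6) by simp
  qed
qed

end
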